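(* Let $p<1/2$, $c(p)=\big|\log\frac{1-p}{p}\big|^{-1}$, and $c>c(p)$. Then $$\mu_p^{\mathcal{U}_0}\big(x: D(x)>c\log t\big)=o(1/t)\quad\text{as }t\to\infty.$$
   Context: Configurations are subsets of $\mathbb{Z}$ (occupied sites). $O$ is the configuration with every negative site occupied and every non-negative site empty; $\mathcal{U}_0$ is the set of configurations in which the number of particles in $[0,\infty)$ is finite and equal to the number of holes in $(-\infty,0)$. For $x\in\mathcal{U}_0$, $D(x)=\sum_{k\ge1}B^{(k)}(x)$, where $B^{(k)}(x)$ is the position of the $k$-th rightmost particle of $x$ plus $k$ (equivalently, the minimal number of nearest-neighbour particle jumps to empty sites needed to go from $O$ to $x$). For $p\in(0,1/2)$, $\mu_p$ is the product measure on configurations under which site $i\in\mathbb{Z}$ is occupied independently with probability $\big(1+\big(\tfrac{1-p}{p}\big)^i\big)^{-1}$; $\mathcal{U}_0$ has positive $\mu_p$-probability and $\mu_p^{\mathcal{U}_0}=\mu_p(\cdot\mid\mathcal{U}_0)$. *)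

theory Defs
  imports "HOL-Probability.Probability" "HOL-Library.Landau_Symbols"
begin

text \<open>A configuration is a function int => bool; site i is occupied iff x i.\<close>
type_synonym config = "int \<Rightarrow> bool"

definition O_config :: config where
  "O_config = (\<lambda>i. i < 0)"

definition U0 :: "config set" where
  "U0 = {x. finite {i. 0 \<le> i \<and> x i} \<and> finite {i. i < 0 \<and> \<not> x i} \<and>
            card {i. 0 \<le> i \<and> x i} = card {i. i < 0 \<and> \<not> x i}}"

fun kth_rightmost :: "config \<Rightarrow> nat \<Rightarrow> int" where
  "kth_rightmost x 0 = undefined"
| "kth_rightmost x (Suc 0) = (GREATEST i. x i)"
| "kth_rightmost x (Suc (Suc k)) = (GREATEST i. x i \<and> i < kth_rightmost x (Suc k))"

definition B :: "config \<Rightarrow> nat \<Rightarrow> int" where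
  "B x k = kth_rightmost x k + int k"

definition D :: "config \<Rightarrow> real" where
  "D x = (\<Sum>k. real_of_int (B x (Suc k)))"

definition occ_prob :: "real \<Rightarrow> int \<Rightarrow> real" where
  "occ_prob p i = 1 / (1 + ((1 - p) / p) powi i)"

definition mu :: "real \<Rightarrow> config measure" where
  "mu p = PiM (UNIV :: int set) (\<lambda>i. measure_pmf (bernoulli_pmf (occ_prob p i)))"

definition mu_U0 :: "real \<Rightarrow> config set \<Rightarrow> real" where
  "mu_U0 p A = measure (mu p) (A \<inter> U0) / measure (mu p) U0"

definition cp :: "real \<Rightarrow> real" where
  "cp p = 1 / \<bar>ln ((1 - p) / p)\<bar>"

end

theory Submission
  imports Defs
begin

text \<open>
  A configuration of \<open>U0\<close> agrees with \<open>O\<close> outside some finite window \<open>[-N, N)\<close>.  For such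
  a configuration we first identify the distance \<open>D x\<close> combinatorially with a sum of site costs
  over the window (a particle at \<open>i \<ge> 0\<close> costs \<open>i\<close>, a hole at \<open>i < 0\<close> costs \<open>-i\<close>), by following
  the rightmost particles one by one.  Under \<open>\<mu>_p\<close> a site has probability at most \<open>q ^ cost\<close>
  with \<open>q = p/(1-p)\<close>, so for any tilt \<open>1 \<le> r < 1/q\<close> the probability of \<open>D > s\<close> on a window is
  at most \<open>r powr -s\<close> times \<open>\<Prod>_i (1 + (rq)^|i|) \<le> exp (2/(1 - rq))\<close>, uniformly in \<open>N\<close>.
  Monotone convergence over the windows gives
  \<open>\<mu>_p (D > s, U0) \<le> r powr -s * exp (2/(1 - rq))\<close>.  Finally, \<open>c > cp p\<close> allows a tilt with
  \<open>c log r > 1\<close>, and then \<open>s = c log t\<close> gives a bound \<open>O(t ^ -(c log r)) = o(1/t)\<close>.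
\<close>

definition window :: "nat \<Rightarrow> int set" where
  "window N = {-int N..<int N}"

definition pinned :: "nat \<Rightarrow> config set" where
  "pinned N = {x. \<forall>i. i \<notin> window N \<longrightarrow> x i = O_config i}"

lemma pinned_iff:
  "x \<in> pinned N \<longleftrightarrow> (\<forall>i. i < -int N \<longrightarrow> x i) \<and> (\<forall>i. int N \<le> i \<longrightarrow> \<not> x i)"
  by (auto simp: pinned_def window_def O_config_def not_le)

lemma pinned_mono: "N \<le> N' \<Longrightarrow> pinned N \<subseteq> pinned N'"
  by (auto simp: pinned_iff)

lemma U0_pinned:
  assumes "x \<in> U0"
  obtains N where "x \<in> pinned N"
proof -
  let ?A = "{i. 0 \<le> i \<and> x i} \<union> {i. i < 0 \<and> \<not> x i}"
  define m where "m = Max (abs ` ?A)"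
  have "finite (abs ` ?A)" using assms unfolding U0_def by (intro finite_imageI finite_UnI) blast+
  hence "\<bar>i\<bar> \<le> m" if "i \<in> ?A" for i
    using that unfolding m_def by (intro Max_ge) auto
  hence b: "\<bar>i\<bar> \<le> int (nat m)" if "i \<in> ?A" for i
    using that by fastforce
  have "x i" if "i < - int (nat m + 1)" for i
  proof (rule ccontr)
    assume "\<not> x i"
    thus False using b[of i] that by simp
  qed
  moreover have "\<not> x i" if "int (nat m + 1) \<le> i" for i
  proof
    assume "x i"
    thus False using b[of i] that by simp
  qed
  ultimately show ?thesis using that pinned_iff by blast
qed

lemma greatest_int:
  fixes P :: "int \<Rightarrow> bool"
  assumes "P z" "\<And>i. P i \<Longrightarrow> i \<le> b"
  shows "P (GREATEST i. P i) \<and> (\<forall>i. P i \<longrightarrow> i \<le> (GREATEST i. P i))"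
proof -
  let ?S = "{i. P i \<and> z \<le> i}"
  have fin: "finite ?S" by (rule finite_subset[of _ "{z..b}"]) (auto simp: assms)
  have m: "P (Max ?S)" "\<forall>i. P i \<longrightarrow> i \<le> Max ?S"
    using Max_in[OF fin] Max_ge[OF fin] assms(1) by fastforce+
  have "(GREATEST i. P i) = Max ?S"
    by (rule Greatest_equality) (use m in auto)
  with m show ?thesis by simp
qed

abbreviation rightmost :: "config \<Rightarrow> nat \<Rightarrow> int" where
  "rightmost x k \<equiv> kth_rightmost x (Suc k)"

lemma rightmost_first:
  assumes "x \<in> pinned N"
  shows "x (rightmost x 0) \<and> (\<forall>i. x i \<longrightarrow> i \<le> rightmost x 0)"
proof -
  have "x (-int N - 1)" "\<And>i. x i \<Longrightarrow> i \<le> int N"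
    using assms by (auto simp: pinned_iff) (meson linorder_not_le order_less_imp_le)
  hence "x (GREATEST i. x i) \<and> (\<forall>i. x i \<longrightarrow> i \<le> (GREATEST i. x i))"
    by (rule greatest_int)
  thus ?thesis by simp
qed

lemma rightmost_next:
  assumes "x \<in> pinned N"
  shows "x (rightmost x (Suc k)) \<and> rightmost x (Suc k) < rightmost x k
    \<and> (\<forall>i. x i \<and> i < rightmost x k \<longrightarrow> i \<le> rightmost x (Suc k))"
proof -
  let ?a = "rightmost x k"
  have "x (min ?a (-int N) - 1) \<and> min ?a (-int N) - 1 < ?a" using assms by (auto simp: pinned_iff)
  thus ?thesis using greatest_int[of "\<lambda>i. x i \<and> i < ?a" _ ?a] by simp
qed

lemma finite_particles_above:
  assumes "x \<in> pinned N"
  shows "finite {i. j \<le> i \<and> x i}"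
  by (rule finite_subset[of _ "{j..<int N}"]) (use assms in \<open>auto simp: pinned_iff not_le[symmetric]\<close>)

lemma rightmost_count:
  assumes "x \<in> pinned N"
  shows "x (rightmost x k) \<and> card {i. rightmost x k \<le> i \<and> x i} = Suc k"
proof (induction k)
  case 0
  have "{i. rightmost x 0 \<le> i \<and> x i} = {rightmost x 0}"
    using rightmost_first[OF assms] by force
  thus ?case using rightmost_first[OF assms] by simp
next
  case (Suc k)
  note step = rightmost_next[OF assms, of k]
  have "{i. rightmost x (Suc k) \<le> i \<and> x i} = insert (rightmost x (Suc k)) {i. rightmost x k \<le> i \<and> x i}"
    using step by force
  moreover have "rightmost x (Suc k) \<notin> {i. rightmost x k \<le> i \<and> x i}" using step by auto
  ultimately show ?case using Suc.IH step finite_particles_above[OF assms] by simp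
qed

lemma particles_in_window:
  assumes "x \<in> pinned N" "x \<in> U0"
  shows "card {i. -int N \<le> i \<and> x i} = N"
proof -
  have bal: "card {i. 0 \<le> i \<and> x i} = card {i. i < 0 \<and> \<not> x i}"
    using assms(2) by (simp add: U0_def)
  have holes: "{i. i < 0 \<and> \<not> x i} = {i\<in>{-int N..<0}. \<not> x i}"
    using assms(1) by (auto simp: pinned_iff not_le[symmetric])
  have "{i. -int N \<le> i \<and> x i} = {i. 0 \<le> i \<and> x i} \<union> {i\<in>{-int N..<0}. x i}" by auto
  also have "card \<dots> = card {i. 0 \<le> i \<and> x i} + card {i\<in>{-int N..<0}. x i}"
    by (rule card_Un_disjoint) (auto intro: finite_particles_above[OF assms(1)] finite_subset[OF _ finite_atLeastLessThan_int])
  also have "\<dots> = card {i\<in>{-int N..<0}. \<not> x i} + card {i\<in>{-int N..<0}. x i}"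
    using bal holes by simp
  also have "\<dots> = card ({i\<in>{-int N..<0}. \<not> x i} \<union> {i\<in>{-int N..<0}. x i})"
    by (rule card_Un_disjoint[symmetric]) (auto intro: finite_subset[OF _ finite_atLeastLessThan_int])
  also have "{i\<in>{-int N..<0}. \<not> x i} \<union> {i\<in>{-int N..<0}. x i} = {-int N..<0}" by auto
  finally show ?thesis by simp
qed

lemma rightmost_deep:
  assumes "x \<in> pinned N" "x \<in> U0" "N \<le> k"
  shows "rightmost x k = - int (Suc k)"
proof -
  let ?S = "{i. -int N \<le> i \<and> x i}"
  note count = rightmost_count[OF assms(1), of k]
  have below: "rightmost x k < -int N"
  proof (rule ccontr)
    assume "\<not> ?thesis"
    hence "{i. rightmost x k \<le> i \<and> x i} \<subseteq> ?S" by auto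
    hence "card {i. rightmost x k \<le> i \<and> x i} \<le> N"
      using card_mono[OF finite_particles_above[OF assms(1)]] particles_in_window[OF assms(1,2)] by metis
    thus False using count assms(3) by simp
  qed
  hence "{i. rightmost x k \<le> i \<and> x i} = {rightmost x k..< -int N} \<union> ?S"
    using assms(1) by (auto simp: pinned_iff)
  moreover have "card ({rightmost x k..< -int N} \<union> ?S) = nat (-int N - rightmost x k) + N"
    using particles_in_window[OF assms(1,2)] finite_particles_above[OF assms(1)]
    by (subst card_Un_disjoint) auto
  ultimately show ?thesis using count below by simp linarith
qed

lemma rightmost_image:
  assumes "x \<in> pinned N" "x \<in> U0"
  shows "inj_on (rightmost x) {..<N}" "rightmost x ` {..<N} = {i \<in> window N. x i}"
proof -
  let ?S = "{i. -int N \<le> i \<and> x i}"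
  have "strict_mono (\<lambda>k. - rightmost x k)"
    by (rule strict_monoI_Suc) (use rightmost_next[OF assms(1)] in auto)
  hence "inj (\<lambda>k. - rightmost x k)" by (rule strict_mono_imp_inj_on)
  thus inj: "inj_on (rightmost x) {..<N}" by (auto simp: inj_on_def)
  have in_window: "-int N \<le> rightmost x k" if "k < N" for k
  proof (rule ccontr)
    assume "\<not> ?thesis"
    hence "insert (rightmost x k) ?S \<subseteq> {i. rightmost x k \<le> i \<and> x i}" "rightmost x k \<notin> ?S"
      using rightmost_count[OF assms(1), of k] by auto
    hence "card (insert (rightmost x k) ?S) \<le> Suc k"
      using card_mono[OF finite_particles_above[OF assms(1)]] rightmost_count[OF assms(1), of k] by metis
    thus False using \<open>rightmost x k \<notin> ?S\<close> finite_particles_above[OF assms(1)]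
      particles_in_window[OF assms] that by simp
  qed
  have "rightmost x ` {..<N} = ?S"
  proof (rule card_subset_eq[OF finite_particles_above[OF assms(1)]])
    show "rightmost x ` {..<N} \<subseteq> ?S" using rightmost_count[OF assms(1)] in_window by auto
    show "card (rightmost x ` {..<N}) = card ?S"
      using card_image[OF inj] particles_in_window[OF assms] by simp
  qed
  also have "?S = {i \<in> window N. x i}"
    using assms(1) by (auto simp: pinned_iff window_def not_le[symmetric])
  finally show "rightmost x ` {..<N} = {i \<in> window N. x i}" .
qed

text \<open>The total cost over the window equals \<open>D\<close>, and \<open>((1-p)/p)^-cost\<close> bounds the
  single-site probabilities.\<close>

definition site_energy :: "int \<Rightarrow> bool \<Rightarrow> nat" where
  "site_energy i b = (if 0 \<le> i then (if b then nat i else 0) else (if b then 0 else nat (-i)))"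

lemma site_energy_as_int: "int (site_energy i b) = (if b then i else 0) - min i 0"
  by (simp add: site_energy_def)

lemma sum_window_min0: "(\<Sum>i\<in>window N. min i 0) = - (\<Sum>k<N. int k + 1)"
proof (induction N)
  case (Suc N)
  have "window (Suc N) = insert (- int (Suc N)) (insert (int N) (window N))"
    by (auto simp: window_def)
  thus ?case using Suc by (simp add: window_def)
qed (simp add: window_def)

lemma window_energy:
  "int (\<Sum>i\<in>window N. site_energy i (x i)) = (\<Sum>i\<in>{i \<in> window N. x i}. i) + (\<Sum>k<N. int k + 1)"
proof -
  have "int (\<Sum>i\<in>window N. site_energy i (x i))
      = (\<Sum>i\<in>window N. if x i then i else 0) - (\<Sum>i\<in>window N. min i 0)"
    by (simp add: site_energy_as_int sum_subtractf)
  also have "(\<Sum>i\<in>window N. if x i then i else 0) = (\<Sum>i\<in>{i \<in> window N. x i}. i)"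
    by (rule sum.inter_filter[symmetric]) (simp add: window_def)
  finally show ?thesis by (simp add: sum_window_min0)
qed

lemma D_pinned:
  assumes "x \<in> pinned N" "x \<in> U0"
  shows "D x = real (\<Sum>i\<in>window N. site_energy i (x i))"
proof -
  have "B x (Suc k) = 0" if "N \<le> k" for k
    using rightmost_deep[OF assms that] by (simp add: B_def)
  hence "D x = (\<Sum>k<N. real_of_int (B x (Suc k)))"
    unfolding D_def by (intro suminf_finite) (auto simp: not_less)
  also have "\<dots> = real_of_int ((\<Sum>k<N. rightmost x k) + (\<Sum>k<N. int k + 1))"
    by (simp add: B_def sum.distrib add.assoc)
  also have "(\<Sum>k<N. rightmost x k) = (\<Sum>i\<in>{i \<in> window N. x i}. i)"
    using sum.reindex[OF rightmost_image(1)[OF assms], of id] rightmost_image(2)[OF assms] by simp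
  finally show ?thesis by (simp add: window_energy[symmetric])
qed

lemma occ_prob_site_bound:
  fixes p :: real
  assumes "0 < p" "p < 1/2"
  shows "pmf (bernoulli_pmf (occ_prob p i)) b \<le> (p / (1 - p)) ^ site_energy i b"
proof -
  define r where "r = (1 - p) / p"
  have r1: "r > 1" using assms by (simp add: r_def field_simps)
  have inv: "p / (1 - p) = inverse r" by (simp add: r_def)
  have rpos: "0 < r powi i" using r1 by simp
  have occ: "occ_prob p i = 1 / (1 + r powi i)" by (simp add: occ_prob_def r_def)
  have occ01: "0 \<le> occ_prob p i" "occ_prob p i \<le> 1"
    using rpos by (auto simp: occ field_simps)
  consider "0 \<le> i" "b" | "0 \<le> i" "\<not> b" | "i < 0" "b" | "i < 0" "\<not> b" by linarith
  thus ?thesis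
  proof cases
    case 1
    have "occ_prob p i \<le> 1 / r powi i" using rpos by (simp add: occ frac_le)
    also have "\<dots> = inverse r ^ nat i" using 1 by (simp add: power_int_def power_inverse divide_inverse)
    finally show ?thesis using 1 occ01 by (simp add: site_energy_def inv)
  next
    case 4
    have "1 - occ_prob p i = r powi i / (1 + r powi i)" using rpos by (simp add: occ field_simps)
    also have "\<dots> \<le> r powi i" using rpos by (simp add: field_simps)
    also have "\<dots> = inverse r ^ nat (-i)" using 4 by (simp add: power_int_def)
    finally show ?thesis using 4 occ01 by (simp add: site_energy_def inv)
  qed (use occ01 in \<open>auto simp: site_energy_def\<close>)
qed

text \<open>Summing the weights \<open>m ^ cost\<close> over all patterns in the window factorizes into a product of
  \<open>1 + m^|i|\<close>, which is bounded uniformly in \<open>N\<close> via a geometric series.\<close>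

lemma window_geometric_sum:
  fixes m :: real
  assumes "0 \<le> m" "m < 1"
  shows "(\<Sum>i\<in>window N. m ^ nat \<bar>i\<bar>) \<le> 2 / (1 - m)"
proof -
  have pairs: "(\<Sum>i\<in>window n. m ^ nat \<bar>i\<bar>) = (\<Sum>k<n. m ^ k + m ^ Suc k)" for n
  proof (induction n)
    case (Suc n)
    have "window (Suc n) = insert (- int (Suc n)) (insert (int n) (window n))"
      by (auto simp: window_def)
    moreover have "nat (int n + 1) = Suc n" by simp
    ultimately show ?case using Suc by (simp add: window_def del: of_nat_Suc)
  qed (simp add: window_def)
  have "(\<Sum>k<N. m ^ k + m ^ Suc k) \<le> (\<Sum>k<N. 2 * m ^ k)"
    using assms by (intro sum_mono) (simp add: mult_left_le_one_le)
  also have "\<dots> = 2 * ((1 - m ^ N) / (1 - m))"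
    using assms by (simp add: sum_distrib_left[symmetric] sum_gp_strict)
  also have "\<dots> \<le> 2 / (1 - m)"
    using assms by (simp add: divide_right_mono)
  finally show ?thesis by (simp add: pairs)
qed

lemma pattern_weight_sum:
  fixes m :: real
  assumes "0 \<le> m" "m < 1"
  shows "(\<Sum>w\<in>PiE (window N) (\<lambda>_. UNIV). \<Prod>i\<in>window N. m ^ site_energy i (w i)) \<le> exp (2 / (1 - m))"
proof -
  have "(\<Sum>w\<in>PiE (window N) (\<lambda>_. UNIV). \<Prod>i\<in>window N. m ^ site_energy i (w i))
      = (\<Prod>i\<in>window N. \<Sum>b\<in>UNIV. m ^ site_energy i b)"
    by (rule prod_sum_PiE[symmetric]) (auto simp: window_def)
  also have "\<dots> = (\<Prod>i\<in>window N. 1 + m ^ nat \<bar>i\<bar>)"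
    by (rule prod.cong) (auto simp: UNIV_bool site_energy_def)
  also have "\<dots> \<le> (\<Prod>i\<in>window N. exp (m ^ nat \<bar>i\<bar>))"
    by (rule prod_mono) (use assms in \<open>auto simp: add.commute exp_ge_add_one_self\<close>)
  also have "\<dots> = exp (\<Sum>i\<in>window N. m ^ nat \<bar>i\<bar>)" by (simp add: exp_sum window_def)
  also have "\<dots> \<le> exp (2 / (1 - m))" using window_geometric_sum[OF assms] by simp
  finally show ?thesis .
qed

lemma PiE_singletons:
  assumes "w \<in> PiE J (\<lambda>_. UNIV)"
  shows "PiE J (\<lambda>i. {w i}) = {w}"
  using assms by (force simp: PiE_iff extensional_def fun_eq_iff)

lemma PiM_pmf_cylinder:
  fixes P :: "'i \<Rightarrow> 'a::finite pmf" and J :: "'i set" and F :: "('i \<Rightarrow> 'a) set"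
  defines "M \<equiv> \<lambda>i. measure_pmf (P i)"
  assumes J: "finite J" and F: "F \<subseteq> PiE J (\<lambda>_. UNIV)"
  shows "prod_emb UNIV M J F \<in> sets (PiM UNIV M)"
    and "emeasure (PiM UNIV M) (prod_emb UNIV M J F) = ennreal (\<Sum>w\<in>F. \<Prod>i\<in>J. pmf (P i) (w i))"
proof -
  define C where "C w = prod_emb UNIV M J {w}" for w
  have finF: "finite F" using J by (rule finite_subset[OF F finite_PiE]) simp
  have box: "{w} = PiE J (\<lambda>i. {w i})" if "w \<in> F" for w
    using PiE_singletons[of w J] F that by auto
  have C_sets: "C w \<in> sets (PiM UNIV M)" if "w \<in> F" for w
    unfolding C_def box[OF that] by (intro measurable_prod_emb sets_PiM_I_finite) (auto simp: J M_def)
  have union: "prod_emb UNIV M J F = (\<Union>w\<in>F. C w)"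
    by (auto simp: C_def prod_emb_def)
  show "prod_emb UNIV M J F \<in> sets (PiM UNIV M)"
    unfolding union by (intro sets.finite_UN finF C_sets)
  have disj: "disjoint_family_on C F"
    by (auto simp: disjoint_family_on_def C_def prod_emb_def)
  have C_meas: "emeasure (PiM UNIV M) (C w) = ennreal (\<Prod>i\<in>J. pmf (P i) (w i))" if "w \<in> F" for w
  proof -
    have "emeasure (PiM UNIV M) (C w) = (\<Prod>i\<in>J. emeasure (M i) {w i})"
      unfolding C_def box[OF that] by (rule emeasure_PiM_emb) (auto simp: J M_def prob_space_measure_pmf)
    thus ?thesis by (simp add: M_def emeasure_pmf_single prod_ennreal)
  qed
  have "emeasure (PiM UNIV M) (\<Union>w\<in>F. C w) = (\<Sum>w\<in>F. emeasure (PiM UNIV M) (C w))"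
    by (rule sum_emeasure[symmetric]) (auto simp: C_sets disj finF)
  also have "\<dots> = ennreal (\<Sum>w\<in>F. \<Prod>i\<in>J. pmf (P i) (w i))"
    by (simp add: C_meas sum_ennreal prod_nonneg)
  finally show "emeasure (PiM UNIV M) (prod_emb UNIV M J F) = ennreal (\<Sum>w\<in>F. \<Prod>i\<in>J. pmf (P i) (w i))"
    by (simp add: union)
qed

lemma PiM_pmf_sets_fixed_outside:
  fixes P :: "'i::countable \<Rightarrow> 'a::finite pmf" and A :: "('i \<Rightarrow> 'a) set"
  defines "M \<equiv> \<lambda>i. measure_pmf (P i)"
  assumes J: "finite J" and fixed: "\<And>x i. x \<in> A \<Longrightarrow> i \<notin> J \<Longrightarrow> x i = z i"
  shows "A \<in> sets (PiM UNIV M)"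
proof -
  let ?outside = "{x \<in> space (PiM UNIV M). \<forall>i. i \<notin> J \<longrightarrow> x i = z i}"
  have outside_sets: "?outside \<in> sets (PiM UNIV M)"
  proof (rule sets.sets_Collect_countable_All)
    fix i
    have "(\<lambda>x. x i) -` {z i} \<inter> space (PiM UNIV M) \<in> sets (PiM UNIV M)"
      by (rule measurable_sets[OF measurable_component_singleton]) (auto simp: M_def)
    moreover have "(\<lambda>x. x i) -` {z i} \<inter> space (PiM UNIV M) = {x \<in> space (PiM UNIV M). x i = z i}"
      by auto
    ultimately show "{x \<in> space (PiM UNIV M). i \<notin> J \<longrightarrow> x i = z i} \<in> sets (PiM UNIV M)"
      by (cases "i \<in> J") simp_all
  qed
  have cylinder_sets: "prod_emb UNIV M J ((\<lambda>x. restrict x J) ` A) \<in> sets (PiM UNIV M)"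
    unfolding M_def by (rule PiM_pmf_cylinder(1)) (auto simp: J)
  have A_eq: "A = ?outside \<inter> prod_emb UNIV M J ((\<lambda>x. restrict x J) ` A)"
  proof (intro equalityI subsetI)
    fix x assume "x \<in> A"
    thus "x \<in> ?outside \<inter> prod_emb UNIV M J ((\<lambda>x. restrict x J) ` A)"
      using fixed by (auto simp: prod_emb_def space_PiM M_def)
  next
    fix x assume x: "x \<in> ?outside \<inter> prod_emb UNIV M J ((\<lambda>x. restrict x J) ` A)"
    then obtain y where y: "y \<in> A" "restrict x J = restrict y J" by (auto simp: prod_emb_def)
    have "x = y"
    proof
      fix i show "x i = y i"
        using x fixed[OF y(1), of i] fun_cong[OF y(2), of i] by (cases "i \<in> J") auto
    qed
    thus "x \<in> A" using y by simp
  qed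
  show ?thesis by (subst A_eq) (rule sets.Int[OF outside_sets cylinder_sets])
qed

text \<open>Exponential Markov inequality in summed form: patterns of cost larger than \<open>s\<close> may be
  reweighted by \<open>r ^ cost\<close> at the price of a factor \<open>r powr -s\<close>.\<close>

lemma exponential_tilt:
  fixes q r s :: real and E :: "'b \<Rightarrow> nat"
  assumes "0 \<le> q" "1 \<le> r" and large: "\<And>w. w \<in> F \<Longrightarrow> s < E w"
  shows "(\<Sum>w\<in>F. q ^ E w) \<le> r powr (-s) * (\<Sum>w\<in>F. (r * q) ^ E w)"
  unfolding sum_distrib_left
proof (rule sum_mono)
  fix w assume "w \<in> F"
  have "1 \<le> r powr (real (E w) - s)"
    using large[OF \<open>w \<in> F\<close>] assms(2) by (intro ge_one_powr_ge_zero) auto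
  also have "\<dots> = r powr (-s) * r ^ E w"
    using assms(2) by (simp add: powr_diff powr_realpow powr_minus divide_inverse mult.commute)
  finally have "1 * q ^ E w \<le> (r powr (-s) * r ^ E w) * q ^ E w"
    using assms(1) by (intro mult_right_mono) auto
  thus "q ^ E w \<le> r powr (-s) * (r * q) ^ E w"
    by (simp add: power_mult_distrib mult.assoc)
qed

lemma window_patterns_bound:
  fixes p r s :: real
  defines "q \<equiv> p / (1 - p)"
  assumes p: "0 < p" "p < 1/2" and r: "1 \<le> r" "r * q < 1"
    and F: "F \<subseteq> PiE (window N) (\<lambda>_. UNIV)"
    and large: "\<And>w. w \<in> F \<Longrightarrow> s < real (\<Sum>i\<in>window N. site_energy i (w i))"
  shows "(\<Sum>w\<in>F. \<Prod>i\<in>window N. pmf (bernoulli_pmf (occ_prob p i)) (w i))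
      \<le> r powr (-s) * exp (2 / (1 - r * q))"
proof -
  define E where "E w = (\<Sum>i\<in>window N. site_energy i (w i))" for w :: config
  have q0: "0 \<le> q" using p by (simp add: q_def)
  have "(\<Sum>w\<in>F. \<Prod>i\<in>window N. pmf (bernoulli_pmf (occ_prob p i)) (w i)) \<le> (\<Sum>w\<in>F. q ^ E w)"
    unfolding E_def power_sum q_def
    by (intro sum_mono prod_mono) (auto simp: occ_prob_site_bound[OF p])
  also have "\<dots> \<le> r powr (-s) * (\<Sum>w\<in>F. (r * q) ^ E w)"
    by (rule exponential_tilt[OF q0 r(1)]) (use large in \<open>simp add: E_def\<close>)
  also have "(\<Sum>w\<in>F. (r * q) ^ E w)
      \<le> (\<Sum>w\<in>PiE (window N) (\<lambda>_. UNIV). \<Prod>i\<in>window N. (r * q) ^ site_energy i (w i))"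
    unfolding E_def power_sum
    using F q0 r by (intro sum_mono2) (auto simp: finite_PiE window_def intro: prod_nonneg)
  also have "\<dots> \<le> exp (2 / (1 - r * q))"
    using q0 r by (intro pattern_weight_sum) auto
  finally show ?thesis by (simp add: mult_left_mono)
qed

lemma pinned_tail_bound:
  fixes p r s :: real
  defines "q \<equiv> p / (1 - p)"
  assumes p: "0 < p" "p < 1/2" and r: "1 \<le> r" "r * q < 1"
  shows "emeasure (mu p) {x \<in> pinned N \<inter> U0. s < D x} \<le> ennreal (r powr (-s) * exp (2 / (1 - r * q)))"
proof -
  define M where "M = (\<lambda>i. measure_pmf (bernoulli_pmf (occ_prob p i)))"
  define G where "G = {x \<in> pinned N \<inter> U0. s < D x}"
  define F where "F = (\<lambda>x. restrict x (window N)) ` G"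
  have F_PiE: "F \<subseteq> PiE (window N) (\<lambda>_. UNIV)" by (auto simp: F_def)
  have "G \<subseteq> prod_emb UNIV M (window N) F" by (auto simp: F_def prod_emb_def space_PiM M_def)
  hence "emeasure (mu p) G \<le> emeasure (PiM UNIV M) (prod_emb UNIV M (window N) F)"
    unfolding mu_def M_def by (intro emeasure_mono PiM_pmf_cylinder(1) F_PiE) (auto simp: window_def)
  also have "\<dots> = ennreal (\<Sum>w\<in>F. \<Prod>i\<in>window N. pmf (bernoulli_pmf (occ_prob p i)) (w i))"
    unfolding M_def by (intro PiM_pmf_cylinder(2) F_PiE) (auto simp: window_def)
  also have "\<dots> \<le> ennreal (r powr (-s) * exp (2 / (1 - r * q)))"
  proof (intro ennreal_leI window_patterns_bound[OF p r[unfolded q_def], folded q_def] F_PiE)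
    fix w assume "w \<in> F"
    then obtain x where x: "x \<in> G" "w = restrict x (window N)" by (auto simp: F_def)
    have "x \<in> pinned N" "x \<in> U0" "s < D x" using x(1) by (simp_all add: G_def)
    note \<open>s < D x\<close>
    also have "D x = real (\<Sum>i\<in>window N. site_energy i (w i))"
      using D_pinned[OF \<open>x \<in> pinned N\<close> \<open>x \<in> U0\<close>] by (simp add: x(2))
    finally show "s < real (\<Sum>i\<in>window N. site_energy i (w i))" .
  qed
  finally show ?thesis by (simp add: G_def)
qed

lemma U0_tail_bound:
  fixes p r s :: real
  defines "q \<equiv> p / (1 - p)"
  assumes p: "0 < p" "p < 1/2" and r: "1 \<le> r" "r * q < 1"
  shows "measure (mu p) ({x. s < D x} \<inter> U0) \<le> r powr (-s) * exp (2 / (1 - r * q))"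
proof -
  define G where "G N = {x \<in> pinned N \<inter> U0. s < D x}" for N
  have G_sets: "G N \<in> sets (mu p)" for N
    unfolding mu_def
    by (rule PiM_pmf_sets_fixed_outside[where J = "window N" and z = O_config])
      (auto simp: G_def pinned_def window_def)
  have "incseq G" using pinned_mono by (force simp: incseq_def G_def)
  hence "(SUP N. emeasure (mu p) (G N)) = emeasure (mu p) (\<Union>N. G N)"
    using G_sets by (intro SUP_emeasure_incseq) auto
  also have "(\<Union>N. G N) = {x. s < D x} \<inter> U0"
    by (auto simp: G_def elim: U0_pinned)
  finally have "emeasure (mu p) ({x. s < D x} \<inter> U0) = (SUP N. emeasure (mu p) (G N))" ..
  also have "\<dots> \<le> ennreal (r powr (-s) * exp (2 / (1 - r * q)))"
    by (rule SUP_least) (unfold G_def q_def, rule pinned_tail_bound[OF p r[unfolded q_def]])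
  finally show ?thesis by (simp add: measure_def enn2real_leI)
qed

text \<open>If \<open>c > cp p\<close> one can choose a tilt \<open>1 < r < (1-p)/p\<close> with \<open>c log r > 1\<close>; the tail bound at
  \<open>s = c log t\<close> then decays like \<open>t ^ -(c log r)\<close>, which is \<open>o(1/t)\<close>.\<close>

lemma tilt_parameter_exists:
  fixes p c :: real
  assumes "0 < p" "p < 1/2" "c > cp p"
  obtains r where "1 < r" "r * (p / (1 - p)) < 1" "1 < c * ln r"
proof -
  define r0 where "r0 = (1 - p) / p"
  have ln_r0: "ln r0 > 0" using assms by (simp add: r0_def field_simps)
  have cp: "cp p = 1 / ln r0" using ln_r0 by (simp add: cp_def r0_def)
  have c_pos: "0 < c" using assms(3) ln_r0 by (simp add: cp order.strict_trans2[of 0 "cp p" c])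
  have "1 = cp p * ln r0" using ln_r0 by (simp add: cp)
  also have "\<dots> < c * ln r0" using assms(3) ln_r0 by simp
  finally have c_ln: "1 < c * ln r0" .
  define L where "L = (ln r0 + 1 / c) / 2"
  have L: "1 / c < L" "L < ln r0" using c_pos c_ln by (auto simp: L_def field_simps)
  show ?thesis
  proof (rule that[of "exp L"])
    show "1 < exp L" using L c_pos by (simp add: order.strict_trans2[of 0 "1/c" L])
    have "0 < r0" using assms by (simp add: r0_def)
    hence "exp L < r0" using L(2) by (metis exp_less_mono exp_ln)
    thus "exp L * (p / (1 - p)) < 1" using assms by (simp add: r0_def field_simps)
    show "1 < c * ln (exp L)" using L c_pos by (simp add: field_simps)
  qed
qed

lemma powr_decay_smallo:
  fixes f :: "real \<Rightarrow> real" and a C :: real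
  assumes "1 < a" and bound: "eventually (\<lambda>t. \<bar>f t\<bar> \<le> C * t powr (-a)) at_top"
  shows "f \<in> o[at_top](\<lambda>t. 1 / t)"
proof -
  have "f \<in> O[at_top](\<lambda>t. t powr (-a))"
    by (rule bigoI[where c = C]) (use bound eventually_gt_at_top[of 0] in \<open>eventually_elim, simp\<close>)
  also have "(\<lambda>t. t powr (-a)) \<in> o[at_top](\<lambda>t. t powr (-1))"
    using powr_smallo_iff[of "\<lambda>t. t" at_top "-a" "-1"] assms(1) by (simp add: filterlim_ident)
  also have "(\<lambda>t::real. t powr (-1)) \<in> O[at_top](\<lambda>t. 1 / t)"
    by (rule bigoI[where c = 1]) (use eventually_gt_at_top[of 0] in \<open>eventually_elim, simp add: powr_minus_divide\<close>)
  finally show ?thesis .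
qed

theorem lemma4p3:
  fixes p c :: real
  assumes "0 < p" "p < 1/2" "c > cp p"
  shows "(\<lambda>t::real. mu_U0 p {x. D x > c * ln t}) \<in> o[at_top](\<lambda>t. 1 / t)"
proof -
  obtain r where r: "1 < r" "r * (p / (1 - p)) < 1" "1 < c * ln r"
    using tilt_parameter_exists[OF assms] .
  define K where "K = exp (2 / (1 - r * (p / (1 - p)))) / measure (mu p) U0"
  have pointwise: "\<bar>mu_U0 p {x. D x > c * ln t}\<bar> \<le> K * t powr (- (c * ln r))" if "0 < t" for t
  proof -
    have "r powr (- (c * ln t)) = t powr (- (c * ln r))"
      using r(1) that by (simp add: powr_def)
    hence "measure (mu p) ({x. c * ln t < D x} \<inter> U0) \<le> exp (2 / (1 - r * (p / (1 - p)))) * t powr (- (c * ln r))"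
      using U0_tail_bound[OF assms(1,2) _ r(2), of "c * ln t"] r(1) by (simp add: mult.commute)
    thus ?thesis by (simp add: mu_U0_def K_def divide_right_mono)
  qed
  have "eventually (\<lambda>t. \<bar>mu_U0 p {x. D x > c * ln t}\<bar> \<le> K * t powr (- (c * ln r))) at_top"
    using eventually_gt_at_top[of 0] by (rule eventually_mono) (rule pointwise)
  thus ?thesis by (rule powr_decay_smallo[OF r(3)])
qed

end
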